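(* Let $f:[a,b]\to\mathbb{C}$ be continuous and write $f=g+ih$ with $g,h:[a,b]\to\mathbb{R}$ its real and imaginary parts. Then: (1) $\dim_H(G(g+ih))\ge \max\{\dim_H(G(g)),\dim_H(G(h))\}$; (2) if $h$ is Lipschitz, then $\dim_H(G(g+ih))=\dim_H(G(g))$.
   Context: For a function $u$ on $[a,b]$, $G(u)=\{(x,u(x)):x\in[a,b]\}$ denotes its graph; for complex-valued $u$ the graph is regarded as a subset of $\mathbb{R}\times\mathbb{C}\cong\mathbb{R}^3$ with the Euclidean metric, for real-valued $u$ as a subset of $\mathbb{R}^2$. $\dim_H$ denotes Hausdorff dimension. *)

theory Defs
  imports "HOL-Analysis.Analysis"
begin

definition graph_on :: "real \<Rightarrow> real \<Rightarrow> (real \<Rightarrow> 'b) \<Rightarrow> (real \<times> 'b) set" where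
  "graph_on a b u = {(x, u x) | x. x \<in> {a..b}}"

definition hausdorff_pre :: "real \<Rightarrow> real \<Rightarrow> 'a::metric_space set \<Rightarrow> ennreal" where
  "hausdorff_pre s \<delta> A =
     (INF U \<in> {U :: nat \<Rightarrow> 'a set. A \<subseteq> (\<Union>i. U i) \<and>
                 (\<forall>i. bounded (U i) \<and> diameter (U i) \<le> \<delta>)}.
        (\<Sum>i. ennreal (diameter (U i) powr s)))"

definition hausdorff_measure :: "real \<Rightarrow> 'a::metric_space set \<Rightarrow> ennreal" where
  "hausdorff_measure s A = (SUP \<delta> \<in> {0<..}. hausdorff_pre s \<delta> A)"

definition hausdorff_dim :: "'a::metric_space set \<Rightarrow> real" where
  "hausdorff_dim A = Inf {s. 0 < s \<and> hausdorff_measure s A = 0}"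

end

theory Submission
  imports Defs
begin

text \<open>Lipschitz maps do not increase Hausdorff dimension. The maps \<open>(x, z) \<mapsto> (x, Re z)\<close> and
  \<open>(x, z) \<mapsto> (x, Im z)\<close> are linear, hence Lipschitz, and carry \<open>G(f)\<close> onto \<open>G(g)\<close> and \<open>G(h)\<close>;
  if \<open>h\<close> is Lipschitz, then \<open>(x, y) \<mapsto> (x, y + i h(x))\<close> is Lipschitz on \<open>G(g)\<close> and carries it onto
  \<open>G(f)\<close>. Since the dimension is an infimum of reals, the monotonicity argument needs some positive
  exponent at which the larger graph is null; a grid cover shows that every bounded subset of
  \<open>\<real>\<^sup>n\<close> has vanishing \<open>(n+1)\<close>-dimensional Hausdorff measure.\<close>

lemma diameter_leI:
  fixes S :: "'a::metric_space set"
  assumes "0 \<le> d" "\<And>x y. x \<in> S \<Longrightarrow> y \<in> S \<Longrightarrow> dist x y \<le> d"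
  shows "diameter S \<le> d"
  using assms unfolding diameter_def by (auto intro!: cSUP_least)

lemma hausdorff_pre_le_cover:
  assumes "A \<subseteq> (\<Union>i. U i)" "\<And>i. bounded (U i)" "\<And>i. diameter (U i) \<le> \<delta>"
  shows "hausdorff_pre s \<delta> A \<le> (\<Sum>i. ennreal (diameter (U i) powr s))"
  unfolding hausdorff_pre_def using assms by (intro INF_lower) auto

lemma hausdorff_pre_le_finite_cover:
  assumes "finite I" "A \<subseteq> (\<Union>i\<in>I. U i)" "0 \<le> \<delta>"
    and "\<And>i. i \<in> I \<Longrightarrow> bounded (U i)" "\<And>i. i \<in> I \<Longrightarrow> diameter (U i) \<le> \<delta>"
  shows "hausdorff_pre s \<delta> A \<le> ennreal (\<Sum>i\<in>I. diameter (U i) powr s)"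
proof -
  obtain h where h: "bij_betw h {..<card I} I"
    using ex_bij_betw_nat_finite[OF \<open>finite I\<close>] by (auto simp: atLeast0LessThan)
  define V where "V k = (if k < card I then U (h k) else {})" for k
  have "A \<subseteq> (\<Union>k. V k)"
    using assms(2) h unfolding V_def bij_betw_def by force
  moreover have "bounded (V k)" "diameter (V k) \<le> \<delta>" for k
    using assms(3-5) bij_betwE[OF h] by (auto simp: V_def)
  ultimately have "hausdorff_pre s \<delta> A \<le> (\<Sum>k. ennreal (diameter (V k) powr s))"
    by (rule hausdorff_pre_le_cover)
  also have "\<dots> = (\<Sum>k<card I. ennreal (diameter (U (h k)) powr s))"
    by (subst suminf_finite[of "{..<card I}"]) (auto simp: V_def)
  also have "\<dots> = ennreal (\<Sum>i\<in>I. diameter (U i) powr s)"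
    using sum.reindex_bij_betw[OF h, of "\<lambda>i. diameter (U i) powr s"] by simp
  finally show ?thesis .
qed

lemma hausdorff_pre_le_measure:
  "0 < \<delta> \<Longrightarrow> hausdorff_pre s \<delta> A \<le> hausdorff_measure s A"
  unfolding hausdorff_measure_def by (intro SUP_upper) auto

lemma hausdorff_measure_eq_0I:
  assumes "\<And>\<delta> e. 0 < \<delta> \<Longrightarrow> 0 < e \<Longrightarrow> hausdorff_pre s \<delta> A \<le> ennreal e"
  shows "hausdorff_measure s A = 0"
proof -
  have "hausdorff_pre s \<delta> A \<le> 0" if "0 < \<delta>" for \<delta>
    by (rule ennreal_le_epsilon) (use assms that in simp)
  then show ?thesis
    unfolding hausdorff_measure_def by simp
qed

lemma lipschitz_on_image_bounded_diameter_le: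
  assumes "K-lipschitz_on A \<phi>" "bounded U"
  shows "bounded (\<phi> ` (U \<inter> A))"
    and "diameter (\<phi> ` (U \<inter> A)) \<le> K * diameter U"
proof -
  have dist_le: "dist x y \<le> K * diameter U" if xy: "x \<in> \<phi> ` (U \<inter> A)" "y \<in> \<phi> ` (U \<inter> A)" for x y
  proof -
    obtain p q where pq: "p \<in> U \<inter> A" "q \<in> U \<inter> A" and "x = \<phi> p" "y = \<phi> q"
      using xy by blast
    then have "dist x y \<le> K * dist p q"
      using lipschitz_onD[OF assms(1)] by simp
    also have "\<dots> \<le> K * diameter U"
      using pq diameter_bounded_bound[OF assms(2)] lipschitz_on_nonneg[OF assms(1)]
      by (intro mult_left_mono) auto
    finally show ?thesis .
  qed
  have nonneg: "0 \<le> K * diameter U"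
    using lipschitz_on_nonneg[OF assms(1)] diameter_ge_0[OF assms(2)] by simp
  show "diameter (\<phi> ` (U \<inter> A)) \<le> K * diameter U"
    using diameter_leI[OF nonneg dist_le] .
  show "bounded (\<phi> ` (U \<inter> A))"
  proof (cases "U \<inter> A = {}")
    case False
    then obtain p where "p \<in> U \<inter> A" by blast
    then have "\<phi> ` (U \<inter> A) \<subseteq> cball (\<phi> p) (K * diameter U)"
      using dist_le by (auto simp: subset_iff)
    then show ?thesis
      using bounded_cball bounded_subset by blast
  qed simp
qed

lemma hausdorff_measure_lipschitz_image_eq_0:
  assumes lip: "K-lipschitz_on A \<phi>" and "0 \<le> s" and null: "hausdorff_measure s A = 0"
  shows "hausdorff_measure s (\<phi> ` A) = 0"
proof (rule hausdorff_measure_eq_0I)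
  fix \<delta> e :: real
  assume "0 < \<delta>" "0 < e"
  define M where "M = K + 1"
  have "0 < M"
    using lipschitz_on_nonneg[OF lip] by (simp add: M_def)
  have lipM: "M-lipschitz_on A \<phi>"
    using lip by (rule lipschitz_on_mono) (auto simp: M_def)
  have "hausdorff_pre s (\<delta> / M) A < ennreal (e / M powr s)"
    using hausdorff_pre_le_measure[of "\<delta> / M" s A] null \<open>0 < \<delta>\<close> \<open>0 < M\<close> \<open>0 < e\<close> by simp
  then obtain U where cover: "A \<subseteq> (\<Union>i. U i)" and U: "\<And>i. bounded (U i)" "\<And>i. diameter (U i) \<le> \<delta> / M"
    and small: "(\<Sum>i. ennreal (diameter (U i) powr s)) < ennreal (e / M powr s)"
    unfolding hausdorff_pre_def INF_less_iff by blast
  define V where "V i = \<phi> ` (U i \<inter> A)" for i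
  have V: "bounded (V i)" "diameter (V i) \<le> M * diameter (U i)" for i
    unfolding V_def using lipschitz_on_image_bounded_diameter_le[OF lipM U(1)] by auto
  have "diameter (V i) \<le> \<delta>" for i
  proof -
    have "M * diameter (U i) \<le> \<delta>"
      using U(2)[of i] \<open>0 < M\<close> by (simp add: pos_le_divide_eq mult.commute)
    then show ?thesis
      using V(2)[of i] by linarith
  qed
  moreover have "\<phi> ` A \<subseteq> (\<Union>i. V i)"
    using cover unfolding V_def by blast
  ultimately have "hausdorff_pre s \<delta> (\<phi> ` A) \<le> (\<Sum>i. ennreal (diameter (V i) powr s))"
    using V(1) by (intro hausdorff_pre_le_cover)
  also have "\<dots> \<le> (\<Sum>i. ennreal (M powr s) * ennreal (diameter (U i) powr s))"
  proof (intro suminf_le allI)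
    fix i
    have "diameter (V i) powr s \<le> (M * diameter (U i)) powr s"
      using V \<open>0 \<le> s\<close> diameter_ge_0 by (intro powr_mono2) auto
    also have "\<dots> = M powr s * diameter (U i) powr s"
      using \<open>0 < M\<close> diameter_ge_0[OF U(1)] by (simp add: powr_mult)
    finally show "ennreal (diameter (V i) powr s) \<le> ennreal (M powr s) * ennreal (diameter (U i) powr s)"
      by (simp add: ennreal_mult[symmetric] ennreal_leI)
  qed auto
  also have "\<dots> = ennreal (M powr s) * (\<Sum>i. ennreal (diameter (U i) powr s))"
    by simp
  also have "\<dots> \<le> ennreal (M powr s) * ennreal (e / M powr s)"
    using small by (intro mult_left_mono) auto
  also have "\<dots> = ennreal e"
    using \<open>0 < M\<close> \<open>0 < e\<close> by (simp flip: ennreal_mult)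
  finally show "hausdorff_pre s \<delta> (\<phi> ` A) \<le> ennreal e" .
qed

definition hausdorff_null_exponents :: "'a::metric_space set \<Rightarrow> real set" where
  "hausdorff_null_exponents A = {s. 0 < s \<and> hausdorff_measure s A = 0}"

lemma hausdorff_dim_eq_Inf_null_exponents:
  "hausdorff_dim A = Inf (hausdorff_null_exponents A)"
  by (simp add: hausdorff_dim_def hausdorff_null_exponents_def)

text \<open>Nonemptiness matters: the infimum of the empty set of reals is an unspecified value.\<close>
lemma hausdorff_dim_lipschitz_image_le:
  assumes "K-lipschitz_on A \<phi>" and "hausdorff_null_exponents A \<noteq> {}"
  shows "hausdorff_dim (\<phi> ` A) \<le> hausdorff_dim A"
proof -
  have "hausdorff_null_exponents A \<subseteq> hausdorff_null_exponents (\<phi> ` A)"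
    using hausdorff_measure_lipschitz_image_eq_0[OF assms(1)]
    by (auto simp: hausdorff_null_exponents_def)
  moreover have "bdd_below (hausdorff_null_exponents (\<phi> ` A))"
    by (rule bdd_belowI[of _ 0]) (simp add: hausdorff_null_exponents_def)
  ultimately show ?thesis
    unfolding hausdorff_dim_eq_Inf_null_exponents using assms(2) by (intro cInf_superset_mono)
qed

lemma floor_grid_approx:
  fixes u w :: real
  assumes "0 < w" "0 \<le> u" "u \<le> real n * w"
  shows "nat \<lfloor>u / w\<rfloor> \<le> n" and "\<bar>u - real (nat \<lfloor>u / w\<rfloor>) * w\<bar> \<le> w"
proof -
  have k: "real (nat \<lfloor>u / w\<rfloor>) = of_int \<lfloor>u / w\<rfloor>"
    using assms by simp
  have "u / w \<le> real n"
    using assms by (simp add: pos_divide_le_eq)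
  then show "nat \<lfloor>u / w\<rfloor> \<le> n"
    using k by linarith
  have "real (nat \<lfloor>u / w\<rfloor>) \<le> u / w" "u / w < real (nat \<lfloor>u / w\<rfloor>) + 1"
    using k by linarith+
  then show "\<bar>u - real (nat \<lfloor>u / w\<rfloor>) * w\<bar> \<le> w"
    using \<open>0 < w\<close> by (simp add: field_simps)
qed

lemma cball_grid_cover:
  fixes A :: "'a::euclidean_space set" and R w :: real and n :: nat
  assumes "A \<subseteq> cball 0 R" "0 < R" "0 < n"
  defines "w \<equiv> 2 * R / real n"
  shows "A \<subseteq> (\<Union>j \<in> Basis \<rightarrow>\<^sub>E {..n}. cball (\<Sum>b\<in>Basis. (real (j b) * w - R) *\<^sub>R b) (DIM('a) * w))"
proof
  fix x assume "x \<in> A"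
  have "0 < w"
    using assms by (simp add: w_def)
  have "norm x \<le> R"
    using \<open>x \<in> A\<close> assms(1) by auto
  moreover have "real n * w = 2 * R"
    using \<open>0 < n\<close> by (simp add: w_def)
  ultimately have coord: "0 \<le> x \<bullet> b + R" "x \<bullet> b + R \<le> real n * w" if "b \<in> Basis" for b
    using Basis_le_norm[OF that, of x] by (simp_all add: abs_le_iff)
  define j where "j = restrict (\<lambda>b. nat \<lfloor>(x \<bullet> b + R) / w\<rfloor>) Basis"
  define c where "c = (\<Sum>b\<in>Basis. (real (j b) * w - R) *\<^sub>R b)"
  have "j \<in> Basis \<rightarrow>\<^sub>E {..n}"
    using floor_grid_approx(1)[OF \<open>0 < w\<close> coord] by (simp add: j_def)
  moreover have "dist c x \<le> DIM('a) * w"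
  proof -
    have "\<bar>(x - c) \<bullet> b\<bar> \<le> w" if "b \<in> Basis" for b
    proof -
      have "c \<bullet> b = real (j b) * w - R"
        using that by (simp add: c_def)
      moreover have "j b = nat \<lfloor>(x \<bullet> b + R) / w\<rfloor>"
        using that by (simp add: j_def)
      ultimately show ?thesis
        using floor_grid_approx(2)[OF \<open>0 < w\<close> coord[OF that]] by (simp add: inner_diff_left)
    qed
    then have "(\<Sum>b\<in>Basis. \<bar>(x - c) \<bullet> b\<bar>) \<le> DIM('a) * w"
      using sum_bounded_above[of Basis "\<lambda>b. \<bar>(x - c) \<bullet> b\<bar>" w] by simp
    then show ?thesis
      using norm_le_l1[of "x - c"] by (simp add: dist_norm norm_minus_commute)
  qed
  ultimately show "x \<in> (\<Union>j \<in> Basis \<rightarrow>\<^sub>E {..n}. cball (\<Sum>b\<in>Basis. (real (j b) * w - R) *\<^sub>R b) (DIM('a) * w))"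
    by (intro UN_I[of j]) (simp_all flip: c_def)
qed

lemma hausdorff_measure_bounded_euclidean_eq_0:
  fixes A :: "'a::euclidean_space set"
  assumes "bounded A"
  shows "hausdorff_measure (real DIM('a) + 1) A = 0"
proof (rule hausdorff_measure_eq_0I)
  \<comment> \<open>\<open>(n+1)\<^sup>d\<close> balls of diameter \<open>C/n\<close> centred on a grid cover \<open>A\<close>, so the sum is \<open>O(1/n)\<close>.\<close>
  fix \<delta> e :: real
  assume "0 < \<delta>" "0 < e"
  obtain R where "0 < R" and "A \<subseteq> cball 0 R"
    using assms by (auto simp: bounded_pos subset_iff)
  define d where "d = DIM('a)"
  define C where "C = 4 * real d * R"
  have "0 < C"
    using \<open>0 < R\<close> by (simp add: C_def d_def)
  obtain n :: nat where n: "max (C / \<delta>) (2 ^ d * C ^ (d + 1) / e) < real n"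
    using reals_Archimedean2 by blast
  have "0 < n"
    using n divide_pos_pos[OF \<open>0 < C\<close> \<open>0 < \<delta>\<close>] by simp
  define w where "w = 2 * R / real n"
  define J where "J = (Basis :: 'a set) \<rightarrow>\<^sub>E {..n}"
  define U where "U j = cball (\<Sum>b\<in>Basis. (real (j b) * w - R) *\<^sub>R b) (real d * w)" for j :: "'a \<Rightarrow> nat"
  have "0 \<le> real d * w"
    using \<open>0 < R\<close> by (simp add: w_def)
  then have diam: "diameter (U j) = C / real n" for j
    by (simp add: U_def w_def C_def)
  have "C / real n \<le> \<delta>"
    using n \<open>0 < n\<close> \<open>0 < \<delta>\<close> by (simp add: field_simps)
  have "finite J" "card J = (n + 1) ^ d"
    by (simp_all add: J_def d_def card_PiE finite_PiE)
  have "A \<subseteq> (\<Union>j\<in>J. U j)"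
    using cball_grid_cover[OF \<open>A \<subseteq> cball 0 R\<close> \<open>0 < R\<close> \<open>0 < n\<close>]
    by (simp add: J_def U_def w_def d_def)
  moreover have "bounded (U j)" for j
    by (simp add: U_def)
  ultimately have "hausdorff_pre (real d + 1) \<delta> A \<le> ennreal (\<Sum>j\<in>J. diameter (U j) powr (real d + 1))"
    using \<open>finite J\<close> \<open>0 < \<delta>\<close> \<open>C / real n \<le> \<delta>\<close>
    by (intro hausdorff_pre_le_finite_cover) (simp_all add: diam)
  also have "\<dots> = ennreal ((n + 1) ^ d * (C / real n) ^ (d + 1))"
  proof -
    have "(C / real n) powr (real d + 1) = (C / real n) ^ (d + 1)"
      using powr_realpow[of "C / real n" "d + 1"] \<open>0 < C\<close> \<open>0 < n\<close> by (simp add: add.commute)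
    then show ?thesis
      using \<open>card J = (n + 1) ^ d\<close> by (simp add: diam)
  qed
  also have "\<dots> \<le> ennreal e"
  proof (rule ennreal_leI)
    have "real (n + 1) \<le> 2 * real n"
      using \<open>0 < n\<close> by simp
    then have "real ((n + 1) ^ d) \<le> (2 * real n) ^ d"
      unfolding of_nat_power by (rule power_mono) simp
    then have "(n + 1) ^ d * (C / real n) ^ (d + 1) \<le> (2 * real n) ^ d * (C / real n) ^ (d + 1)"
      using \<open>0 < C\<close> by (intro mult_right_mono) auto
    also have "\<dots> = 2 ^ d * C ^ (d + 1) / real n"
      using \<open>0 < n\<close> by (simp add: field_simps power_mult_distrib)
    also have "\<dots> \<le> e"
      using n \<open>0 < n\<close> \<open>0 < e\<close> by (simp add: field_simps)
    finally show "(n + 1) ^ d * (C / real n) ^ (d + 1) \<le> e" .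
  qed
  finally show "hausdorff_pre (real DIM('a) + 1) \<delta> A \<le> ennreal e"
    by (simp add: d_def)
qed

corollary hausdorff_dim_bounded_lipschitz_image_le:
  fixes A :: "'a::euclidean_space set"
  assumes "bounded A" and "K-lipschitz_on A \<phi>"
  shows "hausdorff_dim (\<phi> ` A) \<le> hausdorff_dim A"
proof (rule hausdorff_dim_lipschitz_image_le[OF assms(2)])
  show "hausdorff_null_exponents A \<noteq> {}"
    using hausdorff_measure_bounded_euclidean_eq_0[OF assms(1)]
    by (auto simp: hausdorff_null_exponents_def intro!: exI[of _ "real DIM('a) + 1"])
qed

lemma graph_on_eq_image: "graph_on a b u = (\<lambda>x. (x, u x)) ` {a..b}"
  unfolding graph_on_def by auto

lemma graph_on_comp: "graph_on a b (\<lambda>x. \<phi> (u x)) = (\<lambda>p. (fst p, \<phi> (snd p))) ` graph_on a b u"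
  unfolding graph_on_eq_image image_image by simp

lemma bounded_graph_on:
  fixes u :: "real \<Rightarrow> 'b::metric_space"
  assumes "continuous_on {a..b} u"
  shows "bounded (graph_on a b u)"
  unfolding graph_on_eq_image
  by (intro compact_imp_bounded compact_continuous_image continuous_on_Pair continuous_on_id assms)
    simp

lemma hausdorff_dim_graph_on_linear_image_le:
  fixes u :: "real \<Rightarrow> 'a::euclidean_space" and \<phi> :: "'a \<Rightarrow> 'b::real_normed_vector"
  assumes "continuous_on {a..b} u" and "bounded_linear \<phi>"
  shows "hausdorff_dim (graph_on a b (\<lambda>x. \<phi> (u x))) \<le> hausdorff_dim (graph_on a b u)"
proof -
  have "bounded_linear (\<lambda>p :: real \<times> 'a. (fst p, \<phi> (snd p)))"
    using assms(2) by (intro bounded_linear_Pair bounded_linear_fst bounded_linear_compose[OF _ bounded_linear_snd])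
  then obtain B where "B-lipschitz_on (graph_on a b u) (\<lambda>p. (fst p, \<phi> (snd p)))"
    by (rule bounded_linear.lipschitz_boundE)
  then show ?thesis
    unfolding graph_on_comp
    using bounded_graph_on[OF assms(1)] by (rule hausdorff_dim_bounded_lipschitz_image_le[rotated])
qed

lemma hausdorff_dim_graph_on_Complex_le:
  assumes "continuous_on {a..b} g" and "L-lipschitz_on {a..b} h"
  shows "hausdorff_dim (graph_on a b (\<lambda>x. Complex (g x) (h x))) \<le> hausdorff_dim (graph_on a b g)"
proof -
  define G where "G = graph_on a b g"
  have "bounded_linear (\<lambda>p :: real \<times> real. (fst p, complex_of_real (snd p)))"
    by (intro bounded_linear_Pair bounded_linear_fst bounded_linear_compose[OF bounded_linear_of_real bounded_linear_snd])
  then obtain B where lin: "B-lipschitz_on G (\<lambda>p. (fst p, complex_of_real (snd p)))"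
    by (rule bounded_linear.lipschitz_boundE)
  have lift: "L-lipschitz_on G (\<lambda>p. (0::real, \<i> * complex_of_real (h (fst p))))"
  proof (rule lipschitz_onI)
    show "0 \<le> L"
      using assms(2) by (rule lipschitz_on_nonneg)
    fix p q assume "p \<in> G" "q \<in> G"
    then have "fst p \<in> {a..b}" "fst q \<in> {a..b}"
      by (auto simp: G_def graph_on_def)
    have "dist (0::real, \<i> * complex_of_real (h (fst p))) (0, \<i> * complex_of_real (h (fst q)))
        = dist (h (fst p)) (h (fst q))"
      by (simp add: dist_Pair_Pair dist_norm norm_mult flip: right_diff_distrib of_real_diff)
    also have "\<dots> \<le> L * dist (fst p) (fst q)"
      using lipschitz_onD[OF assms(2)] \<open>fst p \<in> {a..b}\<close> \<open>fst q \<in> {a..b}\<close> by simp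
    also have "\<dots> \<le> L * dist p q"
      using \<open>0 \<le> L\<close> by (intro mult_left_mono dist_fst_le)
    finally show "dist (0::real, \<i> * complex_of_real (h (fst p))) (0, \<i> * complex_of_real (h (fst q)))
        \<le> L * dist p q" .
  qed
  have "bounded G"
    unfolding G_def using assms(1) by (rule bounded_graph_on)
  then have "hausdorff_dim ((\<lambda>p. (fst p, complex_of_real (snd p)) + (0, \<i> * complex_of_real (h (fst p)))) ` G)
      \<le> hausdorff_dim G"
    using lipschitz_on_add[OF lin lift] by (rule hausdorff_dim_bounded_lipschitz_image_le)
  moreover have "(\<lambda>p. (fst p, complex_of_real (snd p)) + (0, \<i> * complex_of_real (h (fst p)))) ` G
      = graph_on a b (\<lambda>x. Complex (g x) (h x))"
    unfolding G_def graph_on_eq_image image_image by (simp add: Complex_eq)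
  ultimately show ?thesis
    unfolding G_def by simp
qed

theorem mainTheorem1:
  fixes f :: "real \<Rightarrow> complex" and a b :: real
  assumes "a < b"
    and "continuous_on {a..b} f"
  shows "(hausdorff_dim (graph_on a b f) \<ge>
           max (hausdorff_dim (graph_on a b (\<lambda>x. Re (f x))))
               (hausdorff_dim (graph_on a b (\<lambda>x. Im (f x)))))
         \<and> ((\<exists>L. L-lipschitz_on {a..b} (\<lambda>x. Im (f x))) \<longrightarrow>
           hausdorff_dim (graph_on a b f) = hausdorff_dim (graph_on a b (\<lambda>x. Re (f x))))"
proof (intro conjI impI)
  have Re: "hausdorff_dim (graph_on a b (\<lambda>x. Re (f x))) \<le> hausdorff_dim (graph_on a b f)"
    using assms(2) bounded_linear_Re by (rule hausdorff_dim_graph_on_linear_image_le)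
  moreover have "hausdorff_dim (graph_on a b (\<lambda>x. Im (f x))) \<le> hausdorff_dim (graph_on a b f)"
    using assms(2) bounded_linear_Im by (rule hausdorff_dim_graph_on_linear_image_le)
  ultimately show "max (hausdorff_dim (graph_on a b (\<lambda>x. Re (f x))))
      (hausdorff_dim (graph_on a b (\<lambda>x. Im (f x)))) \<le> hausdorff_dim (graph_on a b f)"
    by simp
  assume "\<exists>L. L-lipschitz_on {a..b} (\<lambda>x. Im (f x))"
  then obtain L where "L-lipschitz_on {a..b} (\<lambda>x. Im (f x))" ..
  from hausdorff_dim_graph_on_Complex_le[OF continuous_on_Re[OF assms(2)] this]
  have "hausdorff_dim (graph_on a b f) \<le> hausdorff_dim (graph_on a b (\<lambda>x. Re (f x)))"
    by simp
  then show "hausdorff_dim (graph_on a b f) = hausdorff_dim (graph_on a b (\<lambda>x. Re (f x)))"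
    using Re by (rule order_antisym)
qed

end
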